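(* Let $k\ge 2$ and $n\ge 1$. For any $c\in\mathbb{N}$, there exists a classical $k$-party SMP protocol for the $k$-party equality function on $n$-bit inputs (the function of $x_1,\dots,x_k\in\{0,1\}^n$ that equals $1$ if and only if $x_1=x_2=\dots=x_k$), in which XOR-shared randomness is used and each player sends $c$ bits to the referee, such that: if $x_1=x_2=\dots=x_k$, the referee's answer is always $1$; otherwise, the referee's answer is $0$ with probability $1-1/2^c$.
   Context: The $k$-party SMP model: players $A_1,\dots,A_k$, where $A_i$ receives $x_i$, each send one message to a referee, who computes the output from the messages. XOR-shared randomness: each player $A_i$ receives an arbitrarily long random string $r_i$ (independent of the input) such that every $k-1$ of the strings $r_1,\dots,r_k$ are uniform and mutually independent, while the bitwise XOR $r_1\oplus\dots\oplus r_k$ is identically $0$. *)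

theory Defs
  imports "HOL-Probability.Probability"
begin

text \<open>Bit strings are boolean lists; True = 1. Bitwise XOR of two strings.\<close>
definition xor_bits :: "bool list \<Rightarrow> bool list \<Rightarrow> bool list" where
  "xor_bits a b = map2 (\<noteq>) a b"

definition xor_all :: "nat \<Rightarrow> bool list list \<Rightarrow> bool list" where
  "xor_all m rs = foldr xor_bits rs (replicate m False)"

definition bitstrings :: "nat \<Rightarrow> bool list set" where
  "bitstrings m = {r. length r = m}"

text \<open>XOR-shared randomness for k players with strings of length m:
  r_1,...,r_{k-1} uniform and independent, r_k their XOR (so the total XOR is 0,
  and every k-1 of them are uniform and independent).\<close>
definition xor_shared :: "nat \<Rightarrow> nat \<Rightarrow> bool list list pmf" where
  "xor_shared k m =
     map_pmf (\<lambda>rs. rs @ [xor_all m rs])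
       (pmf_of_set {rs. length rs = k - 1 \<and> (\<forall>r\<in>set rs. r \<in> bitstrings m)})"

text \<open>A k-party SMP protocol: player i (i < k) sends msg i x_i r_i; the referee
  applies ref to the list of the k messages. Output distribution on inputs xs.\<close>
definition smp_output ::
  "nat \<Rightarrow> nat \<Rightarrow> (nat \<Rightarrow> bool list \<Rightarrow> bool list \<Rightarrow> bool list) \<Rightarrow> (bool list list \<Rightarrow> bool)
    \<Rightarrow> bool list list \<Rightarrow> bool pmf" where
  "smp_output k m msg ref xs =
     map_pmf (\<lambda>rs. ref (map (\<lambda>i. msg i (xs ! i) (rs ! i)) [0..<k])) (xor_shared k m)"

end

theory Submission
  imports Defs
begin

text \<open>Split each player's random string into \<open>c\<close> blocks of \<open>n\<close> bits; bit \<open>j\<close> of player \<open>i\<close>'s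
  message is the inner product over GF(2) of the \<open>j\<close>-th block of \<open>r\<^sub>i\<close> with \<open>x\<^sub>i\<close>, and the referee
  accepts iff every bit position has even parity. Since the \<open>r\<^sub>i\<close> XOR to zero and the inner product
  is bilinear, the parity of position \<open>j\<close> is \<open>\<Oplus>\<^sub>i<k-1 \<langle>r\<^sub>i\<^sup>j, x\<^sub>i \<oplus> x\<^sub>k\<rangle>\<close>. This vanishes when all inputs
  agree; otherwise some \<open>x\<^sub>i \<oplus> x\<^sub>k\<close> has a 1 at a position \<open>p\<close>, and flipping bit \<open>p\<close> in chosen blocks
  of the uniform \<open>r\<^sub>i\<close> flips any prescribed set of parities, so the \<open>c\<close> parities are uniform and all
  vanish with probability \<open>2\<^sup>-\<^sup>c\<close>.\<close>

fun parity :: "bool list \<Rightarrow> bool" where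
  "parity [] = False"
| "parity (b # bs) = (b \<noteq> parity bs)"

lemma parity_append: "parity (xs @ ys) = (parity xs \<noteq> parity ys)"
  by (induction xs) auto

lemma parity_map_neq: "parity (map (\<lambda>i. f i \<noteq> g i) xs) = (parity (map f xs) \<noteq> parity (map g xs))"
  by (induction xs) auto

lemma parity_map_False: "(\<And>x. x \<in> set xs \<Longrightarrow> \<not> f x) \<Longrightarrow> \<not> parity (map f xs)"
  by (induction xs) auto

lemma parity_map_single:
  assumes "distinct xs" "p \<in> set xs" "\<And>x. x \<in> set xs \<Longrightarrow> x \<noteq> p \<Longrightarrow> \<not> f x"
  shows "parity (map f xs) = f p"
  using assms
proof (induction xs)
  case (Cons a xs)
  show ?case
  proof (cases "a = p")
    case True
    with Cons.prems have "\<not> parity (map f xs)" by (intro parity_map_False) auto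
    with True show ?thesis by simp
  qed (use Cons in auto)
qed simp

lemma length_xor_bits: "length (xor_bits a b) = min (length a) (length b)"
  by (simp add: xor_bits_def)

lemma nth_xor_bits: "i < length a \<Longrightarrow> i < length b \<Longrightarrow> xor_bits a b ! i = (a ! i \<noteq> b ! i)"
  by (simp add: xor_bits_def)

lemma xor_bits_cancel: "length a = length b \<Longrightarrow> xor_bits (xor_bits a b) b = a"
  by (induction a b rule: list_induct2) (auto simp: xor_bits_def)

lemma xor_bits_self: "xor_bits a a = replicate (length a) False"
  by (induction a) (auto simp: xor_bits_def)

lemma xor_bits_replicate_False: "xor_bits (replicate (length a) False) a = a"
  by (induction a) (auto simp: xor_bits_def)

lemma length_xor_all: "(\<And>r. r \<in> set rs \<Longrightarrow> length r = m) \<Longrightarrow> length (xor_all m rs) = m"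
  by (induction rs) (auto simp: xor_all_def xor_bits_def)

definition block_dot :: "nat \<Rightarrow> nat \<Rightarrow> bool list \<Rightarrow> bool list \<Rightarrow> bool" where
  "block_dot n j r x = parity (map (\<lambda>l. r ! (j * n + l) \<and> x ! l) [0..<n])"

lemma block_dot_xor_left:
  assumes "Suc j * n \<le> length r" "length s = length r"
  shows "block_dot n j (xor_bits r s) x = (block_dot n j r x \<noteq> block_dot n j s x)"
proof -
  have columns: "map (\<lambda>l. xor_bits r s ! (j * n + l) \<and> x ! l) [0..<n]
      = map (\<lambda>l. (r ! (j * n + l) \<and> x ! l) \<noteq> (s ! (j * n + l) \<and> x ! l)) [0..<n]"
    using assms by (auto simp: nth_xor_bits)
  show ?thesis unfolding block_dot_def columns parity_map_neq ..
qed

lemma block_dot_xor_right: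
  assumes "length x = n" "length y = n"
  shows "block_dot n j r (xor_bits x y) = (block_dot n j r x \<noteq> block_dot n j r y)"
proof -
  have columns: "map (\<lambda>l. r ! (j * n + l) \<and> xor_bits x y ! l) [0..<n]
      = map (\<lambda>l. (r ! (j * n + l) \<and> x ! l) \<noteq> (r ! (j * n + l) \<and> y ! l)) [0..<n]"
    using assms by (auto simp: nth_xor_bits)
  show ?thesis unfolding block_dot_def columns parity_map_neq ..
qed

lemma block_dot_xor_all:
  assumes "\<And>r. r \<in> set rs \<Longrightarrow> length r = m" "Suc j * n \<le> m"
  shows "block_dot n j (xor_all m rs) x = parity (map (\<lambda>r. block_dot n j r x) rs)"
  using assms(1)
proof (induction rs)
  case Nil
  have "\<not> block_dot n j (replicate m False) x"
    unfolding block_dot_def using assms(2) by (intro parity_map_False) auto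
  then show ?case by (simp add: xor_all_def)
next
  case (Cons r rs)
  have "length (xor_all m rs) = m" by (rule length_xor_all) (simp add: Cons.prems)
  then have "block_dot n j (xor_bits r (xor_all m rs)) x
      = (block_dot n j r x \<noteq> block_dot n j (xor_all m rs) x)"
    using Cons.prems assms(2) by (intro block_dot_xor_left) auto
  then show ?case using Cons by (simp add: xor_all_def)
qed

definition block_indicator :: "nat \<Rightarrow> nat \<Rightarrow> nat \<Rightarrow> bool list \<Rightarrow> bool list" where
  "block_indicator n c p t = map (\<lambda>q. q mod n = p \<and> t ! (q div n)) [0..<c * n]"

lemma length_block_indicator: "length (block_indicator n c p t) = c * n"
  by (simp add: block_indicator_def)

lemma block_dot_block_indicator:
  assumes "j < c" "p < n"
  shows "block_dot n j (block_indicator n c p t) x = (t ! j \<and> x ! p)"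
proof -
  have "Suc j * n \<le> c * n" using assms(1) by (intro mult_le_mono1) simp
  then have columns: "map (\<lambda>l. block_indicator n c p t ! (j * n + l) \<and> x ! l) [0..<n]
      = map (\<lambda>l. l = p \<and> t ! j \<and> x ! l) [0..<n]"
    by (auto simp: block_indicator_def)
  have "parity (map (\<lambda>l. l = p \<and> t ! j \<and> x ! l) [0..<n]) = (t ! j \<and> x ! p)"
    using assms(2) by (subst parity_map_single[of _ p]) auto
  then show ?thesis unfolding block_dot_def columns .
qed

definition dot_message :: "nat \<Rightarrow> nat \<Rightarrow> bool list \<Rightarrow> bool list \<Rightarrow> bool list" where
  "dot_message n c x r = map (\<lambda>j. block_dot n j r x) [0..<c]"

definition parity_referee :: "nat \<Rightarrow> bool list list \<Rightarrow> bool" where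
  "parity_referee c ms = (\<forall>j<c. \<not> parity (map (\<lambda>m. m ! j) ms))"

text \<open>\<open>y\<close> is the last player's input and \<open>rs\<close> the \<open>k - 1\<close> independent shares; the last share,
  their XOR, has been eliminated by bilinearity.\<close>
definition syndrome :: "nat \<Rightarrow> nat \<Rightarrow> bool list \<Rightarrow> bool list list \<Rightarrow> bool list list \<Rightarrow> bool list" where
  "syndrome n c y xs rs =
     map (\<lambda>j. parity (map (\<lambda>i. block_dot n j (rs ! i) (xor_bits (xs ! i) y)) [0..<length rs])) [0..<c]"

lemma length_syndrome: "length (syndrome n c y xs rs) = c"
  by (simp add: syndrome_def)

lemma syndrome_eq_replicate_False_iff:
  "syndrome n c y xs rs = replicate c False \<longleftrightarrow> (\<forall>j<c. \<not> syndrome n c y xs rs ! j)"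
  by (simp add: list_eq_iff_nth_eq length_syndrome)

lemma parity_referee_dot_messages:
  assumes rs: "length rs = l" "\<And>r. r \<in> set rs \<Longrightarrow> length r = c * n"
    and xs: "\<And>i. i \<le> l \<Longrightarrow> length (xs ! i) = n"
  shows "parity_referee c (map (\<lambda>i. dot_message n c (xs ! i) ((rs @ [xor_all (c * n) rs]) ! i)) [0..<Suc l])
    \<longleftrightarrow> syndrome n c (xs ! l) xs rs = replicate c False"
proof -
  have column: "parity (map (\<lambda>m. m ! j)
        (map (\<lambda>i. dot_message n c (xs ! i) ((rs @ [xor_all (c * n) rs]) ! i)) [0..<Suc l]))
      = syndrome n c (xs ! l) xs rs ! j" if j: "j < c" for j
  proof -
    have block: "Suc j * n \<le> c * n" using j by (intro mult_le_mono1) simp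
    have "map (\<lambda>r. block_dot n j r (xs ! l)) rs = map (\<lambda>i. block_dot n j (rs ! i) (xs ! l)) [0..<l]"
      using rs(1) by (simp add: list_eq_iff_nth_eq)
    then have last_bit: "block_dot n j (xor_all (c * n) rs) (xs ! l)
        = parity (map (\<lambda>i. block_dot n j (rs ! i) (xs ! l)) [0..<l])"
      using block_dot_xor_all[OF rs(2) block] by simp
    have "syndrome n c (xs ! l) xs rs ! j
        = parity (map (\<lambda>i. block_dot n j (rs ! i) (xor_bits (xs ! i) (xs ! l))) [0..<l])"
      using j rs(1) by (simp add: syndrome_def)
    also have "\<dots> = parity (map (\<lambda>i. block_dot n j (rs ! i) (xs ! i) \<noteq> block_dot n j (rs ! i) (xs ! l)) [0..<l])"
      using xs by (intro arg_cong[where f = parity] map_cong refl block_dot_xor_right) auto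
    finally have syndrome_bit: "syndrome n c (xs ! l) xs rs ! j
        = parity (map (\<lambda>i. block_dot n j (rs ! i) (xs ! i) \<noteq> block_dot n j (rs ! i) (xs ! l)) [0..<l])" .
    have columns: "map (\<lambda>m. m ! j)
        (map (\<lambda>i. dot_message n c (xs ! i) ((rs @ [xor_all (c * n) rs]) ! i)) [0..<Suc l])
      = map (\<lambda>i. block_dot n j (rs ! i) (xs ! i)) [0..<l] @ [block_dot n j (xor_all (c * n) rs) (xs ! l)]"
      using j rs(1) by (simp add: dot_message_def nth_append)
    show ?thesis unfolding columns parity_append last_bit syndrome_bit parity_map_neq by simp
  qed
  show ?thesis
    unfolding parity_referee_def syndrome_eq_replicate_False_iff using column by simp
qed

lemma syndrome_eq_replicate_False_if_equal:
  assumes "length y = n" "\<And>i. i < length rs \<Longrightarrow> length (xs ! i) = n \<and> xs ! i = y"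
  shows "syndrome n c y xs rs = replicate c False"
proof -
  have "\<not> syndrome n c y xs rs ! j" if "j < c" for j
    using that assms by (auto simp: syndrome_def block_dot_xor_right intro!: parity_map_False)
  then show ?thesis by (simp add: syndrome_eq_replicate_False_iff)
qed

definition flip_block_bits :: "nat \<Rightarrow> nat \<Rightarrow> nat \<Rightarrow> nat \<Rightarrow> bool list \<Rightarrow> bool list list \<Rightarrow> bool list list" where
  "flip_block_bits n c p i0 t rs = rs[i0 := xor_bits (rs ! i0) (block_indicator n c p t)]"

lemma flip_block_bits_involutive:
  "length (rs ! i0) = c * n \<Longrightarrow> flip_block_bits n c p i0 t (flip_block_bits n c p i0 t rs) = rs"
  by (cases "i0 < length rs")
    (simp_all add: flip_block_bits_def xor_bits_cancel length_block_indicator list_update_beyond)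

lemma syndrome_flip_block_bits:
  assumes i0: "i0 < length rs" "length (rs ! i0) = c * n"
    and p: "p < n" "xs ! i0 ! p \<noteq> y ! p" "length (xs ! i0) = n" "length y = n"
    and t: "length t = c"
  shows "syndrome n c y xs (flip_block_bits n c p i0 t rs) = xor_bits (syndrome n c y xs rs) t"
proof -
  let ?rs' = "flip_block_bits n c p i0 t rs"
  have entry: "syndrome n c y xs ?rs' ! j = (syndrome n c y xs rs ! j \<noteq> t ! j)" if j: "j < c" for j
  proof -
    have "Suc j * n \<le> c * n" using j by (intro mult_le_mono1) simp
    then have block: "Suc j * n \<le> length (rs ! i0)" using i0(2) by simp
    have flipped: "block_dot n j (?rs' ! i) (xor_bits (xs ! i) y)
        = (block_dot n j (rs ! i) (xor_bits (xs ! i) y) \<noteq> (i = i0 \<and> t ! j))" for i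
    proof (cases "i = i0")
      case True
      have "xor_bits (xs ! i0) y ! p" using p by (simp add: nth_xor_bits)
      with True i0 show ?thesis
        using block_dot_xor_left[OF block] block_dot_block_indicator[OF j p(1)]
        by (simp add: flip_block_bits_def length_block_indicator)
    qed (simp add: flip_block_bits_def)
    have "syndrome n c y xs ?rs' ! j
        = parity (map (\<lambda>i. block_dot n j (?rs' ! i) (xor_bits (xs ! i) y)) [0..<length rs])"
      using j by (simp add: syndrome_def flip_block_bits_def)
    also have "\<dots> = (syndrome n c y xs rs ! j \<noteq> parity (map (\<lambda>i. i = i0 \<and> t ! j) [0..<length rs]))"
      unfolding flipped parity_map_neq using j by (simp add: syndrome_def)
    also have "parity (map (\<lambda>i. i = i0 \<and> t ! j) [0..<length rs]) = t ! j"
      using i0(1) by (subst parity_map_single[of _ i0]) auto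
    finally show ?thesis .
  qed
  show ?thesis
    using t by (intro nth_equalityI) (simp_all add: length_syndrome length_xor_bits nth_xor_bits entry)
qed

lemma finite_bitstrings: "finite (bitstrings m)"
  using finite_lists_length_eq[of "UNIV :: bool set" m] by (simp add: bitstrings_def)

lemma card_bitstrings: "card (bitstrings m) = 2 ^ m"
  using card_lists_length_eq[of "UNIV :: bool set" m] by (simp add: bitstrings_def)

text \<open>\<open>T t\<close> maps the zero fibre of \<open>g\<close> bijectively onto the fibre over \<open>t\<close>, so all \<open>2\<^sup>c\<close> fibres
  have the same size.\<close>
lemma card_zero_fibre_mult_two_power:
  fixes g :: "'a \<Rightarrow> bool list" and T :: "bool list \<Rightarrow> 'a \<Rightarrow> 'a"
  assumes "finite S" and g: "\<And>s. s \<in> S \<Longrightarrow> length (g s) = c"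
    and T: "\<And>t s. t \<in> bitstrings c \<Longrightarrow> s \<in> S \<Longrightarrow> T t s \<in> S \<and> T t (T t s) = s \<and> g (T t s) = xor_bits (g s) t"
  shows "card {s \<in> S. g s = replicate c False} * 2 ^ c = card S"
proof -
  define fibre where "fibre u = {s \<in> S. g s = u}" for u
  let ?zero = "replicate c False"
  have fibre_bij: "bij_betw (T u) (fibre ?zero) (fibre u)" if u: "u \<in> bitstrings c" for u
  proof (rule bij_betw_byWitness[where f' = "T u"])
    have "length u = c" using u by (simp add: bitstrings_def)
    then show "T u ` fibre ?zero \<subseteq> fibre u" "T u ` fibre u \<subseteq> fibre ?zero"
      using T[OF u] by (auto simp: fibre_def xor_bits_self xor_bits_replicate_False[of u, simplified])
  qed (use T[OF u] in \<open>auto simp: fibre_def\<close>)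
  have "S = (\<Union>u\<in>bitstrings c. fibre u)"
    using g by (auto simp: fibre_def bitstrings_def)
  also have "card \<dots> = (\<Sum>u\<in>bitstrings c. card (fibre u))"
    using \<open>finite S\<close> by (intro card_UN_disjoint) (auto simp: finite_bitstrings fibre_def)
  also have "\<dots> = (\<Sum>u\<in>bitstrings c. card (fibre ?zero))"
    using fibre_bij by (intro sum.cong refl) (metis bij_betw_same_card)
  also have "\<dots> = card (fibre ?zero) * 2 ^ c"
    by (simp add: card_bitstrings)
  finally show ?thesis unfolding fibre_def ..
qed

definition bitstring_lists :: "nat \<Rightarrow> nat \<Rightarrow> bool list list set" where
  "bitstring_lists l m = {rs. set rs \<subseteq> bitstrings m \<and> length rs = l}"

lemma finite_bitstring_lists: "finite (bitstring_lists l m)"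
  unfolding bitstring_lists_def by (rule finite_lists_length_eq[OF finite_bitstrings])

lemma bitstring_lists_nonempty: "bitstring_lists l m \<noteq> {}"
proof -
  have "replicate l (replicate m False) \<in> bitstring_lists l m"
    by (auto simp: bitstring_lists_def bitstrings_def)
  then show ?thesis by blast
qed

lemma flip_block_bits_in_bitstring_lists:
  assumes "rs \<in> bitstring_lists l (c * n)"
  shows "flip_block_bits n c p i0 t rs \<in> bitstring_lists l (c * n)"
proof (cases "i0 < l")
  case True
  with assms have "length (rs ! i0) = c * n"
    by (auto simp: bitstring_lists_def bitstrings_def dest!: nth_mem)
  then have "xor_bits (rs ! i0) (block_indicator n c p t) \<in> bitstrings (c * n)"
    by (simp add: bitstrings_def length_xor_bits length_block_indicator)
  with assms show ?thesis
    using set_update_subset_insert[of rs i0] by (auto simp: flip_block_bits_def bitstring_lists_def)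
qed (use assms in \<open>simp add: flip_block_bits_def list_update_beyond bitstring_lists_def\<close>)

lemma measure_pmf_of_set_False:
  fixes d :: nat
  assumes "finite S" "S \<noteq> {}" "card {s \<in> S. P s} * d = card S"
  shows "measure_pmf.prob (map_pmf P (pmf_of_set S)) {False} = 1 - 1 / d"
proof -
  have card_bounds: "card {s \<in> S. P s} \<le> card S" "card S > 0"
    using assms by (auto intro: card_mono simp: card_gt_0_iff)
  have "S \<inter> P -` {False} = S - {s \<in> S. P s}" by auto
  then have "measure_pmf.prob (map_pmf P (pmf_of_set S)) {False}
      = (real (card S) - real (card {s \<in> S. P s})) / real (card S)"
    using assms(1,2) card_bounds(1)
    by (simp add: measure_map_pmf measure_pmf_of_set card_Diff_subset of_nat_diff)
  also have "\<dots> = 1 - 1 / d"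
    using card_bounds(2) assms(3)[symmetric] by (simp add: field_simps)
  finally show ?thesis .
qed

lemma smp_output_dot_protocol:
  assumes "length xs = Suc l" "\<forall>x\<in>set xs. length x = n"
  shows "smp_output (Suc l) (c * n) (\<lambda>_. dot_message n c) (parity_referee c) xs
    = map_pmf (\<lambda>rs. syndrome n c (xs ! l) xs rs = replicate c False)
        (pmf_of_set (bitstring_lists l (c * n)))"
proof -
  have shares: "{rs. length rs = Suc l - 1 \<and> (\<forall>r\<in>set rs. r \<in> bitstrings (c * n))}
      = bitstring_lists l (c * n)"
    by (auto simp: bitstring_lists_def)
  have input_lengths: "\<And>i. i \<le> l \<Longrightarrow> length (xs ! i) = n"
    using assms by (simp add: less_Suc_eq_le[symmetric])
  show ?thesis
    unfolding smp_output_def xor_shared_def shares map_pmf_comp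
  proof (rule map_pmf_cong[OF refl])
    fix rs assume "rs \<in> set_pmf (pmf_of_set (bitstring_lists l (c * n)))"
    then have "rs \<in> bitstring_lists l (c * n)"
      by (simp add: finite_bitstring_lists bitstring_lists_nonempty)
    then show "parity_referee c (map (\<lambda>i. dot_message n c (xs ! i) ((rs @ [xor_all (c * n) rs]) ! i)) [0..<Suc l])
        = (syndrome n c (xs ! l) xs rs = replicate c False)"
      by (intro parity_referee_dot_messages input_lengths) (auto simp: bitstring_lists_def bitstrings_def)
  qed
qed

lemma obtain_differing_bit:
  fixes xs :: "'a list list"
  assumes "length xs = Suc l" "\<forall>x\<in>set xs. length x = n"
    and "\<not> (\<forall>i<Suc l. \<forall>j<Suc l. xs ! i = xs ! j)"
  obtains i p where "i < l" "p < n" "xs ! i ! p \<noteq> xs ! l ! p"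
proof -
  obtain i where i: "i < l" "xs ! i \<noteq> xs ! l"
    using assms(3) by (metis less_Suc_eq)
  have "length (xs ! i) = n" "length (xs ! l) = n"
    using assms(1,2) i(1) by auto
  with i(2) obtain p where "p < n" "xs ! i ! p \<noteq> xs ! l ! p"
    using nth_equalityI by metis
  with i(1) show ?thesis by (rule that)
qed

lemma card_accepting_shares_mult_two_power:
  assumes i0: "i0 < l" and p: "p < n" "xs ! i0 ! p \<noteq> y ! p"
    and input_lengths: "length (xs ! i0) = n" "length y = n"
  shows "card {rs \<in> bitstring_lists l (c * n). syndrome n c y xs rs = replicate c False} * 2 ^ c
    = card (bitstring_lists l (c * n))"
proof (rule card_zero_fibre_mult_two_power[OF finite_bitstring_lists])
  fix t rs assume t: "t \<in> bitstrings c" and rs: "rs \<in> bitstring_lists l (c * n)"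
  have rs_lengths: "length rs = l" "length (rs ! i0) = c * n"
    using rs i0 by (auto simp: bitstring_lists_def bitstrings_def dest!: nth_mem)
  show "flip_block_bits n c p i0 t rs \<in> bitstring_lists l (c * n)
      \<and> flip_block_bits n c p i0 t (flip_block_bits n c p i0 t rs) = rs
      \<and> syndrome n c y xs (flip_block_bits n c p i0 t rs) = xor_bits (syndrome n c y xs rs) t"
  proof (intro conjI flip_block_bits_in_bitstring_lists[OF rs]
      flip_block_bits_involutive[OF rs_lengths(2)] syndrome_flip_block_bits)
  qed (use i0 p input_lengths rs_lengths t in \<open>simp_all add: bitstrings_def\<close>)
qed (simp add: length_syndrome)

lemma dot_protocol_accepts_equal_inputs:
  assumes "length xs = Suc l" "\<forall>x\<in>set xs. length x = n" "\<forall>i<Suc l. \<forall>j<Suc l. xs ! i = xs ! j"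
  shows "\<forall>b\<in>set_pmf (smp_output (Suc l) (c * n) (\<lambda>_. dot_message n c) (parity_referee c) xs). b"
proof -
  have "syndrome n c (xs ! l) xs rs = replicate c False" if "rs \<in> bitstring_lists l (c * n)" for rs
    using that assms by (intro syndrome_eq_replicate_False_if_equal) (auto simp: bitstring_lists_def)
  then show ?thesis
    using assms(1,2)
    by (simp add: smp_output_dot_protocol finite_bitstring_lists bitstring_lists_nonempty)
qed

lemma dot_protocol_error_probability:
  assumes "length xs = Suc l" "\<forall>x\<in>set xs. length x = n" "\<not> (\<forall>i<Suc l. \<forall>j<Suc l. xs ! i = xs ! j)"
  shows "measure_pmf.prob (smp_output (Suc l) (c * n) (\<lambda>_. dot_message n c) (parity_referee c) xs) {False}
    = 1 - 1 / 2 ^ c"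
proof -
  obtain i0 p where i0: "i0 < l" and p: "p < n" "xs ! i0 ! p \<noteq> xs ! l ! p"
    using obtain_differing_bit[OF assms] .
  have "length (xs ! i0) = n" "length (xs ! l) = n"
    using assms(1,2) i0 by auto
  with i0 p have "card {rs \<in> bitstring_lists l (c * n). syndrome n c (xs ! l) xs rs = replicate c False}
      * 2 ^ c = card (bitstring_lists l (c * n))"
    by (rule card_accepting_shares_mult_two_power)
  from measure_pmf_of_set_False[OF finite_bitstring_lists bitstring_lists_nonempty this]
  show ?thesis unfolding smp_output_dot_protocol[OF assms(1,2)] by simp
qed

theorem claim3:
  fixes k n c :: nat
  assumes "k \<ge> 2" and "n \<ge> 1"
  shows "\<exists>(m::nat) msg ref.
    (\<forall>i<k. \<forall>x r. length x = n \<longrightarrow> length r = m \<longrightarrow> length (msg i x r) = c) \<and>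
    (\<forall>xs. length xs = k \<and> (\<forall>x\<in>set xs. length x = n) \<longrightarrow>
       ((\<forall>i<k. \<forall>j<k. xs ! i = xs ! j) \<longrightarrow>
           (\<forall>b\<in>set_pmf (smp_output k m msg ref xs). b = True)) \<and>
       (\<not> (\<forall>i<k. \<forall>j<k. xs ! i = xs ! j) \<longrightarrow>
           measure_pmf.prob (smp_output k m msg ref xs) {False} = 1 - 1 / 2 ^ c))"
proof -
  obtain l where k: "k = Suc l" using assms(1) by (cases k) auto
  show ?thesis
    unfolding k
    using dot_protocol_accepts_equal_inputs[of _ l n c] dot_protocol_error_probability[of _ l n c]
    by (intro exI[of _ "c * n"] exI[of _ "\<lambda>_. dot_message n c"] exI[of _ "parity_referee c"])
      (simp add: dot_message_def, blast)
qed

end
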